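(* Let $d:\mathcal{A}\to A$ be any derivation. Then $d(\mathcal{A}\cap\mathcal{K})\subseteq\mathcal{K}$. Consequently $d$ induces a derivation $[d]:[\mathcal{A}]\to A/\mathcal{K}\cong C(S^1)\oplus C(S^1)$, $[d]([a])=[d(a)]$.
   Context: Let $\{E_k\}$ be the canonical basis of $\ell^2(\mathbb{Z})$, $UE_k=E_{k+1}$, $\mathbb{K}E_k=kE_k$, $a(\mathbb{K})E_k=a(k)E_k$. $c(\mathbb{Z})$ is the set of $a:\mathbb{Z}\to\mathbb{C}$ with limits $a(\pm\infty)$ at $\pm\infty$; $A$ is the C$^*$-algebra generated by $U$ and all $a(\mathbb{K})$, $a\in c(\mathbb{Z})$. $\mathcal{A}$ is the algebra of finite sums $\sum_nU^na_n(\mathbb{K})$ with each $a_n$ eventually constant (constant on $k\ge k_0$ and on $k\le-k_0$ for some $k_0$). $\mathcal{K}$ is the ideal of compact operators on $\ell^2(\mathbb{Z})$; it is contained in $A$ and $A/\mathcal{K}\cong C(S^1)\oplus C(S^1)$ via $\sigma=(\sigma_+,\sigma_-)$, $\sigma_\pm(U)=e^{ix}$, $\sigma_\pm(a(\mathbb{K}))=a(\pm\infty)$; $[\mathcal{A}]$ denotes the image of $\mathcal{A}$. A derivation is a linear map satisfying the Leibniz rule. *)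

theory Defs
  imports "HOL-Analysis.Analysis" "HOL-Library.Function_Algebras"
begin

text \<open>Bounded operators on l2(Z) are represented by their matrices
  M i j = <M E_j, E_i>, of type int => int => complex.\<close>

type_synonym mat = "int \<Rightarrow> int \<Rightarrow> complex"
type_synonym vec = "int \<Rightarrow> complex"

definition l2 :: "vec \<Rightarrow> bool" where
  "l2 x \<longleftrightarrow> (\<lambda>k. (cmod (x k))^2) summable_on UNIV"

definition l2norm :: "vec \<Rightarrow> real" where
  "l2norm x = sqrt (infsum (\<lambda>k. (cmod (x k))^2) UNIV)"

definition mapply :: "mat \<Rightarrow> vec \<Rightarrow> vec" where
  "mapply M x = (\<lambda>i. infsum (\<lambda>j. M i j * x j) UNIV)"

definition bounded_mat :: "mat \<Rightarrow> bool" where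
  "bounded_mat M \<longleftrightarrow>
     (\<forall>x. l2 x \<longrightarrow> (\<forall>i. (\<lambda>j. M i j * x j) summable_on UNIV)) \<and>
     (\<exists>C. \<forall>x. l2 x \<longrightarrow> l2 (mapply M x) \<and> l2norm (mapply M x) \<le> C * l2norm x)"

definition opnorm :: "mat \<Rightarrow> real" where
  "opnorm M = Sup {l2norm (mapply M x) | x. l2 x \<and> l2norm x \<le> 1}"

definition mmult :: "mat \<Rightarrow> mat \<Rightarrow> mat" where
  "mmult M N = (\<lambda>i k. infsum (\<lambda>j. M i j * N j k) UNIV)"

definition madj :: "mat \<Rightarrow> mat" where
  "madj M = (\<lambda>i j. cnj (M j i))"

definition mscale :: "complex \<Rightarrow> mat \<Rightarrow> mat" where
  "mscale c M = (\<lambda>i j. c * M i j)"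

text \<open>U^n (n :: int): U^n E_k = E_{k+n}.\<close>
definition Upow :: "int \<Rightarrow> mat" where
  "Upow n = (\<lambda>i j. if i = j + n then 1 else 0)"

definition Ushift :: mat where
  "Ushift = Upow 1"

definition diag :: "(int \<Rightarrow> complex) \<Rightarrow> mat" where
  "diag a = (\<lambda>i j. if i = j then a j else 0)"

definition cZ :: "(int \<Rightarrow> complex) set" where
  "cZ = {a. (\<exists>l. (a \<longlongrightarrow> l) at_top) \<and> (\<exists>l. (a \<longlongrightarrow> l) at_bot)}"

definition ev_const :: "(int \<Rightarrow> complex) \<Rightarrow> bool" where
  "ev_const a \<longleftrightarrow> (\<exists>k0::int. (\<forall>k\<ge>k0. a k = a k0) \<and> (\<forall>k\<le>-k0. a k = a (-k0)))"

text \<open>The C*-algebra A generated by U and all a(K), a in c(Z):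
  the least set of bounded operators containing the generators and closed under
  +, scalar multiplication, composition, adjoint and operator-norm limits.\<close>
inductive_set Calg :: "mat set" where
  gen_U: "Ushift \<in> Calg"
| gen_diag: "a \<in> cZ \<Longrightarrow> diag a \<in> Calg"
| add: "M \<in> Calg \<Longrightarrow> N \<in> Calg \<Longrightarrow> M + N \<in> Calg"
| scale: "M \<in> Calg \<Longrightarrow> mscale c M \<in> Calg"
| mult: "M \<in> Calg \<Longrightarrow> N \<in> Calg \<Longrightarrow> mmult M N \<in> Calg"
| adj: "M \<in> Calg \<Longrightarrow> madj M \<in> Calg"
| lim: "(\<And>n. f n \<in> Calg) \<Longrightarrow> bounded_mat M \<Longrightarrow>
        (\<lambda>n. opnorm (f n - M)) \<longlonglongrightarrow> 0 \<Longrightarrow> M \<in> Calg"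

text \<open>The dense subalgebra: finite sums of U^n a_n(K), a_n eventually constant.\<close>
definition Alg0 :: "mat set" where
  "Alg0 = {M. \<exists>(F::int set) (a::int \<Rightarrow> int \<Rightarrow> complex).
             finite F \<and> (\<forall>n\<in>F. ev_const (a n)) \<and>
             M = (\<Sum>n\<in>F. mmult (Upow n) (diag (a n)))}"

text \<open>Compact operators: bounded, and the image of the closed unit ball is totally
  bounded (equivalently relatively compact, l2 being complete).\<close>
definition compact_op :: "mat \<Rightarrow> bool" where
  "compact_op M \<longleftrightarrow> bounded_mat M \<and>
     (\<forall>e>0. \<exists>F. finite F \<and> (\<forall>y\<in>F. l2 y) \<and>
        (\<forall>x. l2 x \<and> l2norm x \<le> 1 \<longrightarrow> (\<exists>y\<in>F. l2norm (mapply M x - y) < e)))"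

definition derivation_on :: "(mat \<Rightarrow> mat) \<Rightarrow> bool" where
  "derivation_on d \<longleftrightarrow>
     (\<forall>M\<in>Alg0. d M \<in> Calg) \<and>
     (\<forall>M\<in>Alg0. \<forall>N\<in>Alg0. d (M + N) = d M + d N) \<and>
     (\<forall>M\<in>Alg0. \<forall>c. d (mscale c M) = mscale c (d M)) \<and>
     (\<forall>M\<in>Alg0. \<forall>N\<in>Alg0. d (mmult M N) = mmult (d M) N + mmult M (d N))"

end

theory Submission
  imports Defs
begin

(* An element M = sum_n U^n a_n(K) of Alg0 is a finite sum of weighted shifts with eventually
   constant weights. If M is compact, every limit a_n(+-oo) vanishes: otherwise M maps infinitely
   many, well separated basis vectors E_j to c E_(j+n) with c \<noteq> 0, which no compact operator
   does. So M is a finite matrix, supported in a box [-R,R]^2. The diagonal projection P onto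
   span {E_k : |k| \<le> R} lies in Alg0 and M = M P, hence d M = d(M) P + M d(P) vanishes outside
   the rows and columns indexed by [-R,R]. Such a bounded operator has finite rank and is
   therefore compact.

   That the elements of A are bounded is shown through bounds for the sesquilinear form
   <y, M x> on finite sections, which survive adjoints and products without any exchange of
   infinite sums. *)

section \<open>Finite sections of square-summable sequences\<close>

definition l2norm_on :: "vec \<Rightarrow> int set \<Rightarrow> real" where
  "l2norm_on x G = L2_set (\<lambda>i. cmod (x i)) G"

lemma l2norm_on_nonneg [simp]: "0 \<le> l2norm_on x G"
  by (simp add: l2norm_on_def)

lemma l2norm_on_empty [simp]: "l2norm_on x {} = 0"
  by (simp add: l2norm_on_def)

lemma l2norm_on_cnj [simp]: "l2norm_on (\<lambda>i. cnj (x i)) G = l2norm_on x G"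
  by (simp add: l2norm_on_def)

lemma l2norm_on_square: "finite G \<Longrightarrow> (l2norm_on x G)\<^sup>2 = (\<Sum>i\<in>G. (cmod (x i))\<^sup>2)"
  unfolding l2norm_on_def L2_set_def by (simp add: sum_nonneg)

lemma l2norm_nonneg [simp]: "0 \<le> l2norm x"
  unfolding l2norm_def by (simp add: infsum_nonneg)

lemma l2norm_on_le_l2norm:
  assumes "l2 x" "finite G"
  shows "l2norm_on x G \<le> l2norm x"
proof -
  have "(\<Sum>i\<in>G. (cmod (x i))\<^sup>2) \<le> infsum (\<lambda>k. (cmod (x k))\<^sup>2) UNIV"
    using assms by (intro finite_sum_le_infsum) (auto simp: l2_def)
  then show ?thesis
    unfolding l2norm_on_def L2_set_def l2norm_def by simp
qed

lemma l2_if_l2norm_on_bounded: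
  assumes "\<And>G. finite G \<Longrightarrow> l2norm_on x G \<le> B"
  shows "l2 x \<and> l2norm x \<le> B"
proof -
  have "0 \<le> B"
    using assms[of "{}"] by simp
  have sections: "(\<Sum>i\<in>G. (cmod (x i))\<^sup>2) \<le> B\<^sup>2" if "finite G" for G
    using assms[OF that] l2norm_on_square[OF that] by (metis l2norm_on_nonneg power_mono)
  have summable: "(\<lambda>k. (cmod (x k))\<^sup>2) summable_on UNIV"
    using sections by (intro nonneg_bdd_above_summable_on) (auto simp: bdd_above_def)
  have "infsum (\<lambda>k. (cmod (x k))\<^sup>2) UNIV \<le> B\<^sup>2"
    using sections by (intro infsum_le_finite_sums[OF summable]) auto
  then have "l2norm x \<le> B"
    unfolding l2norm_def using real_sqrt_le_mono \<open>0 \<le> B\<close> by fastforce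
  with summable show ?thesis
    by (simp add: l2_def)
qed

lemma l2_restrict:
  assumes "finite F"
  shows "l2 (\<lambda>j. if j \<in> F then x j else 0) \<and> l2norm (\<lambda>j. if j \<in> F then x j else 0) = l2norm_on x F"
proof -
  let ?f = "\<lambda>k. (cmod (if k \<in> F then x k else 0))\<^sup>2"
  have "?f summable_on UNIV \<longleftrightarrow> ?f summable_on F"
    by (rule summable_on_cong_neutral) auto
  moreover have "infsum ?f UNIV = infsum ?f F"
    by (rule infsum_cong_neutral) auto
  ultimately show ?thesis
    using assms unfolding l2_def l2norm_def l2norm_on_def L2_set_def by simp
qed

lemma l2_unit_vector: "l2 (\<lambda>i. if i = j then 1 else 0) \<and> l2norm (\<lambda>i. if i = j then 1 else 0) = 1"
  using l2_restrict[of "{j}" "\<lambda>_. 1"] by (simp add: l2norm_on_def)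

lemma mapply_restrict:
  assumes "finite F"
  shows "mapply M (\<lambda>j. if j \<in> F then x j else 0) i = (\<Sum>j\<in>F. M i j * x j)"
proof -
  have "mapply M (\<lambda>j. if j \<in> F then x j else 0) i = infsum (\<lambda>j. M i j * (if j \<in> F then x j else 0)) F"
    unfolding mapply_def by (rule infsum_cong_neutral) auto
  then show ?thesis
    using assms by simp
qed

lemma mapply_unit_vector: "mapply M (\<lambda>k. if k = j then 1 else 0) = (\<lambda>i. M i j)"
  using mapply_restrict[of "{j}" M "\<lambda>_. 1"] by auto

lemma l2_add:
  assumes "l2 x" "l2 y"
  shows "l2 (x + y) \<and> l2norm (x + y) \<le> l2norm x + l2norm y"
proof (rule l2_if_l2norm_on_bounded)
  fix G :: "int set"
  assume G: "finite G"
  have "l2norm_on (x + y) G \<le> L2_set (\<lambda>i. cmod (x i) + cmod (y i)) G"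
    unfolding l2norm_on_def by (rule L2_set_mono) (auto simp: norm_triangle_ineq)
  also have "\<dots> \<le> l2norm_on x G + l2norm_on y G"
    unfolding l2norm_on_def by (rule L2_set_triangle_ineq)
  also have "\<dots> \<le> l2norm x + l2norm y"
    using l2norm_on_le_l2norm[OF assms(1) G] l2norm_on_le_l2norm[OF assms(2) G] by simp
  finally show "l2norm_on (x + y) G \<le> l2norm x + l2norm y" .
qed

lemma l2_scale:
  assumes "l2 x"
  shows "l2 (\<lambda>i. c * x i) \<and> l2norm (\<lambda>i. c * x i) \<le> cmod c * l2norm x"
proof (rule l2_if_l2norm_on_bounded)
  fix G :: "int set"
  assume "finite G"
  then have "cmod c * l2norm_on x G \<le> cmod c * l2norm x"
    using l2norm_on_le_l2norm[OF assms] by (simp add: mult_left_mono)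
  then show "l2norm_on (\<lambda>i. c * x i) G \<le> cmod c * l2norm x"
    unfolding l2norm_on_def by (simp add: norm_mult L2_set_right_distrib)
qed

lemma l2_diff:
  assumes "l2 x" "l2 y"
  shows "l2 (x - y) \<and> l2norm (x - y) \<le> l2norm x + l2norm y"
proof -
  have minus: "x - y = x + (\<lambda>i. (-1) * y i)"
    by (auto simp: fun_eq_iff)
  have "l2 (\<lambda>i. (-1) * y i)" "l2norm (\<lambda>i. (-1) * y i) \<le> l2norm y"
    using l2_scale[OF assms(2), of "-1"] by simp_all
  then show ?thesis
    unfolding minus using l2_add[OF assms(1)] by fastforce
qed

lemma l2_sum:
  assumes "finite I" "\<And>m. m \<in> I \<Longrightarrow> l2 (v m)"
  shows "l2 (\<lambda>i. \<Sum>m\<in>I. c m * v m i)"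
  using assms
proof (induction I rule: finite_induct)
  case empty
  then show ?case
    by (simp add: l2_def)
next
  case (insert a I)
  then have "(\<lambda>i. \<Sum>m\<in>insert a I. c m * v m i) = (\<lambda>i. c a * v a i) + (\<lambda>i. \<Sum>m\<in>I. c m * v m i)"
    by (auto simp: fun_eq_iff)
  then show ?case
    using l2_add l2_scale insert by simp
qed

lemma cmod_le_l2norm: "l2 z \<Longrightarrow> cmod (z r) \<le> l2norm z"
  using l2norm_on_le_l2norm[of z "{r}"] by (simp add: l2norm_on_def)

lemma sum_cmod_mult_le_l2norm_on: "(\<Sum>j\<in>F. cmod (u j) * cmod (v j)) \<le> l2norm_on u F * l2norm_on v F"
  using L2_set_mult_ineq[of "\<lambda>j. cmod (u j)" "\<lambda>j. cmod (v j)" F] by (simp add: l2norm_on_def)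

lemma l2norm_on_shift_le:
  assumes "finite F" "finite G"
  shows "l2norm_on (\<lambda>j. if j + n \<in> G then y (j + n) else 0) F \<le> l2norm_on y G"
proof -
  have "(cmod (if j + n \<in> G then y (j + n) else 0))\<^sup>2 = (if j + n \<in> G then (cmod (y (j + n)))\<^sup>2 else 0)" for j
    by simp
  then have "(\<Sum>j\<in>F. (cmod (if j + n \<in> G then y (j + n) else 0))\<^sup>2)
      = (\<Sum>j\<in>{j\<in>F. j + n \<in> G}. (cmod (y (j + n)))\<^sup>2)"
    using assms(1) by (simp add: sum.inter_filter)
  also have "\<dots> = (\<Sum>i\<in>(\<lambda>j. j + n) ` {j\<in>F. j + n \<in> G}. (cmod (y i))\<^sup>2)"
    by (subst sum.reindex) (auto simp: inj_on_def)
  also have "\<dots> \<le> (\<Sum>i\<in>G. (cmod (y i))\<^sup>2)"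
    using assms(2) by (intro sum_mono2) auto
  finally show ?thesis
    unfolding l2norm_on_def L2_set_def by simp
qed

lemma infsum_Cauchy_Schwarz:
  assumes "\<And>G. finite G \<Longrightarrow> l2norm_on u G \<le> A"
      and "\<And>G. finite G \<Longrightarrow> l2norm_on v G \<le> B"
  shows "(\<lambda>j. u j * v j) summable_on UNIV \<and> cmod (infsum (\<lambda>j. u j * v j) UNIV) \<le> A * B"
proof -
  have "0 \<le> A"
    using assms(1)[of "{}"] by simp
  have sections: "(\<Sum>j\<in>G. cmod (u j * v j)) \<le> A * B" if "finite G" for G
  proof -
    have "(\<Sum>j\<in>G. cmod (u j * v j)) \<le> l2norm_on u G * l2norm_on v G"
      using sum_cmod_mult_le_l2norm_on by (simp add: norm_mult)
    also have "\<dots> \<le> A * B"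
      using assms that \<open>0 \<le> A\<close> by (intro mult_mono) auto
    finally show ?thesis .
  qed
  have abs_summable: "(\<lambda>j. cmod (u j * v j)) summable_on UNIV"
    using sections by (intro nonneg_bdd_above_summable_on) (auto simp: bdd_above_def)
  have "cmod (infsum (\<lambda>j. u j * v j) UNIV) \<le> infsum (\<lambda>j. cmod (u j * v j)) UNIV"
    using abs_summable by (intro norm_infsum_bound) simp
  also have "\<dots> \<le> A * B"
    using sections by (intro infsum_le_finite_sums[OF abs_summable]) auto
  finally show ?thesis
    using abs_summable_summable[OF abs_summable] by blast
qed

lemma infsum_sum:
  fixes f :: "'i \<Rightarrow> 'a \<Rightarrow> 'b::{topological_comm_monoid_add, t2_space}"
  assumes "finite I" "\<And>i. i \<in> I \<Longrightarrow> f i summable_on A"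
  shows "(\<lambda>j. \<Sum>i\<in>I. f i j) summable_on A \<and> infsum (\<lambda>j. \<Sum>i\<in>I. f i j) A = (\<Sum>i\<in>I. infsum (f i) A)"
  using assms by (induction I rule: finite_induct) (auto simp: summable_on_add infsum_add)

lemma l2norm_on_le_if_inner_le:
  assumes "finite G" "0 \<le> K" "cmod (\<Sum>i\<in>G. cnj (v i) * v i) \<le> K * l2norm_on v G"
  shows "l2norm_on v G \<le> K"
proof -
  have "cnj (v i) * v i = of_real ((cmod (v i))\<^sup>2)" for i
    by (metis complex_norm_square mult.commute)
  then have "(\<Sum>i\<in>G. cnj (v i) * v i) = of_real ((l2norm_on v G)\<^sup>2)"
    by (simp add: l2norm_on_square[OF assms(1)])
  then have "l2norm_on v G * l2norm_on v G \<le> K * l2norm_on v G"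
    using assms(3) by (simp add: norm_mult power2_eq_square)
  then show ?thesis
    using assms(2) by (cases "l2norm_on v G = 0") (auto simp: mult_le_cancel_right)
qed


section \<open>Operators with a bounded sesquilinear form\<close>

text \<open>Unlike \<^const>\<open>bounded_mat\<close>, this notion is stable under adjoints and composition with
  elementary proofs, as it only involves finite sums.\<close>

definition form_bounded :: "mat \<Rightarrow> real \<Rightarrow> bool" where
  "form_bounded M C \<longleftrightarrow> 0 \<le> C \<and> (\<forall>x y F G. finite F \<longrightarrow> finite G \<longrightarrow>
     cmod (\<Sum>i\<in>G. \<Sum>j\<in>F. cnj (y i) * M i j * x j) \<le> C * l2norm_on x F * l2norm_on y G)"

lemma form_bounded_nonneg: "form_bounded M C \<Longrightarrow> 0 \<le> C"
  unfolding form_bounded_def by blast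

lemma form_boundedD:
  "form_bounded M C \<Longrightarrow> finite F \<Longrightarrow> finite G \<Longrightarrow>
     cmod (\<Sum>i\<in>G. \<Sum>j\<in>F. cnj (y i) * M i j * x j) \<le> C * l2norm_on x F * l2norm_on y G"
  unfolding form_bounded_def by blast

lemma form_bounded_madj:
  assumes "form_bounded M C"
  shows "form_bounded (madj M) C"
  unfolding form_bounded_def
proof (intro conjI allI impI)
  show "0 \<le> C"
    using form_bounded_nonneg[OF assms] .
  fix x y :: vec and F G :: "int set"
  assume F: "finite F" and G: "finite G"
  have "(\<Sum>i\<in>G. \<Sum>j\<in>F. cnj (y i) * madj M i j * x j) = cnj (\<Sum>j\<in>F. \<Sum>i\<in>G. cnj (x j) * M j i * y i)"
    unfolding madj_def by (subst sum.swap) (simp add: cnj_sum ac_simps)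
  then have "cmod (\<Sum>i\<in>G. \<Sum>j\<in>F. cnj (y i) * madj M i j * x j) = cmod (\<Sum>j\<in>F. \<Sum>i\<in>G. cnj (x j) * M j i * y i)"
    by (simp only: complex_mod_cnj)
  also have "\<dots> \<le> C * l2norm_on y G * l2norm_on x F"
    using form_boundedD[OF assms G F] .
  finally show "cmod (\<Sum>i\<in>G. \<Sum>j\<in>F. cnj (y i) * madj M i j * x j) \<le> C * l2norm_on x F * l2norm_on y G"
    by (simp add: mult_ac)
qed

lemma form_bounded_section:
  assumes "form_bounded M C" "finite F" "finite G"
  shows "l2norm_on (\<lambda>i. \<Sum>j\<in>F. M i j * x j) G \<le> C * l2norm_on x F"
proof -
  define v where "v = (\<lambda>i. \<Sum>j\<in>F. M i j * x j)"
  have "(\<Sum>i\<in>G. cnj (v i) * v i) = (\<Sum>i\<in>G. \<Sum>j\<in>F. cnj (v i) * M i j * x j)"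
    by (simp add: v_def sum_distrib_left mult.assoc)
  then have "cmod (\<Sum>i\<in>G. cnj (v i) * v i) \<le> C * l2norm_on x F * l2norm_on v G"
    using form_boundedD[OF assms] by simp
  then have "l2norm_on v G \<le> C * l2norm_on x F"
    using assms(3) form_bounded_nonneg[OF assms(1)] by (intro l2norm_on_le_if_inner_le) auto
  then show ?thesis
    by (simp add: v_def)
qed

lemma form_bounded_column:
  assumes "form_bounded M C" "finite G"
  shows "l2norm_on (\<lambda>i. M i k) G \<le> C"
  using form_bounded_section[OF assms(1) _ assms(2), of "{k}" "\<lambda>_. 1"] by (simp add: l2norm_on_def)

lemma form_bounded_row:
  assumes "form_bounded M C" "finite G"
  shows "l2norm_on (\<lambda>j. M i j) G \<le> C"
  using form_bounded_column[OF form_bounded_madj[OF assms(1)] assms(2), of i]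
  by (simp add: madj_def)

lemma form_bounded_row_summable:
  assumes "form_bounded M C" "\<And>H. finite H \<Longrightarrow> l2norm_on w H \<le> B"
  shows "(\<lambda>j. M i j * w j) summable_on UNIV"
  using infsum_Cauchy_Schwarz[of "\<lambda>j. M i j" C w B] form_bounded_row[OF assms(1)] assms(2) by blast

lemma form_bounded_infsum:
  assumes "form_bounded M C" "\<And>H. finite H \<Longrightarrow> l2norm_on w H \<le> B" "finite G"
  shows "cmod (\<Sum>i\<in>G. cnj (y i) * infsum (\<lambda>j. M i j * w j) UNIV) \<le> C * l2norm_on y G * B"
proof -
  define u where "u j = (\<Sum>i\<in>G. cnj (y i) * M i j)" for j
  have "(\<Sum>i\<in>G. cnj (y i) * infsum (\<lambda>j. M i j * w j) UNIV)
       = (\<Sum>i\<in>G. infsum (\<lambda>j. cnj (y i) * (M i j * w j)) UNIV)"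
    by (simp add: infsum_cmult_right')
  also have "\<dots> = infsum (\<lambda>j. \<Sum>i\<in>G. cnj (y i) * (M i j * w j)) UNIV"
    using infsum_sum[OF assms(3), of "\<lambda>i j. cnj (y i) * (M i j * w j)" UNIV]
      form_bounded_row_summable[OF assms(1,2)] by (simp add: summable_on_cmult_right)
  also have "\<dots> = infsum (\<lambda>j. u j * w j) UNIV"
    unfolding u_def by (simp add: sum_distrib_right mult.assoc)
  finally have sum_eq: "(\<Sum>i\<in>G. cnj (y i) * infsum (\<lambda>j. M i j * w j) UNIV) = infsum (\<lambda>j. u j * w j) UNIV" .
  have "u = (\<lambda>j. cnj (\<Sum>i\<in>G. madj M j i * y i))"
    unfolding u_def madj_def by (auto simp: cnj_sum mult_ac)
  then have "l2norm_on u H = l2norm_on (\<lambda>j. \<Sum>i\<in>G. madj M j i * y i) H" for H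
    by (simp only: l2norm_on_cnj)
  then have "l2norm_on u H \<le> C * l2norm_on y G" if "finite H" for H
    using form_bounded_section[OF form_bounded_madj[OF assms(1)] assms(3) that] by simp
  then have "cmod (infsum (\<lambda>j. u j * w j) UNIV) \<le> C * l2norm_on y G * B"
    using infsum_Cauchy_Schwarz[of u "C * l2norm_on y G" w B] assms(2) by blast
  then show ?thesis
    using sum_eq by simp
qed

lemma form_bounded_add:
  assumes "form_bounded M C1" "form_bounded N C2"
  shows "form_bounded (M + N) (C1 + C2)"
  unfolding form_bounded_def
proof (intro conjI allI impI)
  show "0 \<le> C1 + C2"
    using form_bounded_nonneg[OF assms(1)] form_bounded_nonneg[OF assms(2)] by simp
  fix x y :: vec and F G :: "int set"
  assume F: "finite F" and G: "finite G"
  have "(\<Sum>i\<in>G. \<Sum>j\<in>F. cnj (y i) * (M + N) i j * x j) =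
        (\<Sum>i\<in>G. \<Sum>j\<in>F. cnj (y i) * M i j * x j) + (\<Sum>i\<in>G. \<Sum>j\<in>F. cnj (y i) * N i j * x j)"
    by (simp add: sum.distrib[symmetric] algebra_simps)
  then have "cmod (\<Sum>i\<in>G. \<Sum>j\<in>F. cnj (y i) * (M + N) i j * x j) \<le>
        cmod (\<Sum>i\<in>G. \<Sum>j\<in>F. cnj (y i) * M i j * x j) + cmod (\<Sum>i\<in>G. \<Sum>j\<in>F. cnj (y i) * N i j * x j)"
    by (simp add: norm_triangle_ineq)
  also have "\<dots> \<le> C1 * l2norm_on x F * l2norm_on y G + C2 * l2norm_on x F * l2norm_on y G"
    using form_boundedD[OF assms(1) F G] form_boundedD[OF assms(2) F G] by (rule add_mono)
  finally show "cmod (\<Sum>i\<in>G. \<Sum>j\<in>F. cnj (y i) * (M + N) i j * x j) \<le> (C1 + C2) * l2norm_on x F * l2norm_on y G"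
    by (simp add: algebra_simps)
qed

lemma form_bounded_mscale:
  assumes "form_bounded M C"
  shows "form_bounded (mscale c M) (cmod c * C)"
  unfolding form_bounded_def
proof (intro conjI allI impI)
  show "0 \<le> cmod c * C"
    using form_bounded_nonneg[OF assms] by simp
  fix x y :: vec and F G :: "int set"
  assume F: "finite F" and G: "finite G"
  have "(\<Sum>i\<in>G. \<Sum>j\<in>F. cnj (y i) * mscale c M i j * x j) = c * (\<Sum>i\<in>G. \<Sum>j\<in>F. cnj (y i) * M i j * x j)"
    by (simp add: mscale_def sum_distrib_left algebra_simps)
  then have "cmod (\<Sum>i\<in>G. \<Sum>j\<in>F. cnj (y i) * mscale c M i j * x j) =
        cmod c * cmod (\<Sum>i\<in>G. \<Sum>j\<in>F. cnj (y i) * M i j * x j)"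
    by (simp add: norm_mult)
  also have "\<dots> \<le> cmod c * (C * l2norm_on x F * l2norm_on y G)"
    using form_boundedD[OF assms F G] by (simp add: mult_left_mono)
  finally show "cmod (\<Sum>i\<in>G. \<Sum>j\<in>F. cnj (y i) * mscale c M i j * x j) \<le> cmod c * C * l2norm_on x F * l2norm_on y G"
    by (simp add: algebra_simps)
qed

lemma form_bounded_mmult:
  assumes "form_bounded M C1" "form_bounded N C2"
  shows "form_bounded (mmult M N) (C1 * C2)"
  unfolding form_bounded_def
proof (intro conjI allI impI)
  show "0 \<le> C1 * C2"
    using form_bounded_nonneg[OF assms(1)] form_bounded_nonneg[OF assms(2)] by simp
  fix x y :: vec and F G :: "int set"
  assume F: "finite F" and G: "finite G"
  define w where "w j = (\<Sum>k\<in>F. N j k * x k)" for j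
  have w_bounded: "l2norm_on w H \<le> C2 * l2norm_on x F" if "finite H" for H
    unfolding w_def by (rule form_bounded_section[OF assms(2) F that])
  have summable: "(\<lambda>j. M i j * N j k) summable_on UNIV" for i k
    using form_bounded_row_summable[OF assms(1) form_bounded_column[OF assms(2)]] .
  have row: "(\<Sum>k\<in>F. mmult M N i k * x k) = infsum (\<lambda>j. M i j * w j) UNIV" for i
  proof -
    have "(\<Sum>k\<in>F. mmult M N i k * x k) = (\<Sum>k\<in>F. infsum (\<lambda>j. M i j * N j k * x k) UNIV)"
      unfolding mmult_def by (intro sum.cong refl) (rule infsum_cmult_left'[symmetric])
    also have "\<dots> = infsum (\<lambda>j. \<Sum>k\<in>F. M i j * N j k * x k) UNIV"
      using infsum_sum[OF F, of "\<lambda>k j. M i j * N j k * x k" UNIV] summable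
      by (simp add: summable_on_cmult_left)
    also have "\<dots> = infsum (\<lambda>j. M i j * w j) UNIV"
      unfolding w_def by (simp add: sum_distrib_left mult.assoc)
    finally show ?thesis .
  qed
  have "(\<Sum>i\<in>G. \<Sum>k\<in>F. cnj (y i) * mmult M N i k * x k) = (\<Sum>i\<in>G. cnj (y i) * infsum (\<lambda>j. M i j * w j) UNIV)"
    by (simp add: row[symmetric] sum_distrib_left mult.assoc)
  then have "cmod (\<Sum>i\<in>G. \<Sum>k\<in>F. cnj (y i) * mmult M N i k * x k) \<le> C1 * l2norm_on y G * (C2 * l2norm_on x F)"
    using form_bounded_infsum[OF assms(1) w_bounded G] by simp
  then show "cmod (\<Sum>i\<in>G. \<Sum>j\<in>F. cnj (y i) * mmult M N i j * x j) \<le> C1 * C2 * l2norm_on x F * l2norm_on y G"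
    by (simp add: algebra_simps)
qed

definition wshift :: "int \<Rightarrow> (int \<Rightarrow> complex) \<Rightarrow> mat" where
  "wshift n b = (\<lambda>i j. if i = j + n then b j else 0)"

lemma form_bounded_wshift:
  assumes bounded: "\<And>j. cmod (b j) \<le> B" and "0 \<le> B"
  shows "form_bounded (wshift n b) B"
  unfolding form_bounded_def
proof (intro conjI allI impI)
  show "0 \<le> B"
    by fact
  fix x y :: vec and F G :: "int set"
  assume F: "finite F" and G: "finite G"
  define w where "w = (\<lambda>j. if j + n \<in> G then y (j + n) else 0)"
  have column: "(\<Sum>i\<in>G. cnj (y i) * wshift n b i j * x j) = cnj (w j) * b j * x j" for j
  proof -
    have "(\<Sum>i\<in>G. cnj (y i) * wshift n b i j * x j) = (\<Sum>i\<in>G. if i = j + n then cnj (y i) * b j * x j else 0)"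
      unfolding wshift_def by (intro sum.cong) auto
    then show ?thesis
      using G by (simp add: w_def sum.delta)
  qed
  have "(\<Sum>i\<in>G. \<Sum>j\<in>F. cnj (y i) * wshift n b i j * x j) = (\<Sum>j\<in>F. cnj (w j) * b j * x j)"
    by (subst sum.swap) (simp add: column)
  then have "cmod (\<Sum>i\<in>G. \<Sum>j\<in>F. cnj (y i) * wshift n b i j * x j) \<le> (\<Sum>j\<in>F. cmod (cnj (w j) * b j * x j))"
    by (simp only: norm_sum)
  also have "\<dots> \<le> (\<Sum>j\<in>F. B * (cmod (x j) * cmod (w j)))"
    using bounded \<open>0 \<le> B\<close> by (intro sum_mono) (auto simp: norm_mult mult_right_mono mult.commute mult.left_commute)
  also have "\<dots> \<le> B * (l2norm_on x F * l2norm_on w F)"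
    unfolding sum_distrib_left[symmetric] using \<open>0 \<le> B\<close> by (intro mult_left_mono sum_cmod_mult_le_l2norm_on)
  also have "\<dots> \<le> B * (l2norm_on x F * l2norm_on y G)"
    using l2norm_on_shift_le[OF F G] \<open>0 \<le> B\<close> unfolding w_def by (intro mult_left_mono) auto
  finally show "cmod (\<Sum>i\<in>G. \<Sum>j\<in>F. cnj (y i) * wshift n b i j * x j) \<le> B * l2norm_on x F * l2norm_on y G"
    by (simp add: mult.assoc)
qed

lemma form_bounded_mapply:
  assumes "form_bounded M C" "l2 x"
  shows "l2 (mapply M x) \<and> l2norm (mapply M x) \<le> C * l2norm x"
proof (rule l2_if_l2norm_on_bounded)
  fix G :: "int set"
  assume G: "finite G"
  have x_bounded: "\<And>H. finite H \<Longrightarrow> l2norm_on x H \<le> l2norm x"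
    using l2norm_on_le_l2norm[OF assms(2)] by blast
  define v where "v = mapply M x"
  have "cmod (\<Sum>i\<in>G. cnj (v i) * v i) \<le> C * l2norm x * l2norm_on v G"
    using form_bounded_infsum[OF assms(1) x_bounded G, of v] unfolding v_def mapply_def
    by (simp add: mult_ac)
  then have "l2norm_on v G \<le> C * l2norm x"
    using G form_bounded_nonneg[OF assms(1)] by (intro l2norm_on_le_if_inner_le) auto
  then show "l2norm_on (mapply M x) G \<le> C * l2norm x"
    by (simp add: v_def)
qed

lemma form_bounded_mapply_coordinate:
  assumes "form_bounded M C" "l2 x" "l2norm x \<le> 1"
  shows "cmod (mapply M x m) \<le> C"
proof -
  have "cmod (mapply M x m) \<le> C * l2norm x"
    using cmod_le_l2norm form_bounded_mapply[OF assms(1,2)] by (meson order_trans)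
  also have "\<dots> \<le> C"
    using assms(3) form_bounded_nonneg[OF assms(1)] by (simp add: mult_left_le)
  finally show ?thesis .
qed

lemma form_bounded_imp_bounded_mat:
  assumes "form_bounded M C"
  shows "bounded_mat M"
  unfolding bounded_mat_def
  using form_bounded_mapply[OF assms] form_bounded_row_summable[OF assms l2norm_on_le_l2norm] by blast

lemma bounded_mat_imp_form_bounded:
  assumes "bounded_mat M"
  shows "\<exists>C. form_bounded M C"
proof -
  obtain C0 where C0: "\<And>x. l2 x \<Longrightarrow> l2 (mapply M x) \<and> l2norm (mapply M x) \<le> C0 * l2norm x"
    using assms unfolding bounded_mat_def by blast
  define C where "C = max C0 0"
  have "form_bounded M C"
    unfolding form_bounded_def
  proof (intro conjI allI impI)
    show "0 \<le> C"
      unfolding C_def by simp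
    fix x y :: vec and F G :: "int set"
    assume F: "finite F" and G: "finite G"
    define x' where "x' = (\<lambda>j. if j \<in> F then x j else 0)"
    have x': "l2 x'" "l2norm x' = l2norm_on x F"
      using l2_restrict[OF F] unfolding x'_def by auto
    have "(\<Sum>i\<in>G. \<Sum>j\<in>F. cnj (y i) * M i j * x j) = (\<Sum>i\<in>G. cnj (y i) * mapply M x' i)"
      using F by (simp add: x'_def mapply_restrict sum_distrib_left mult.assoc)
    then have "cmod (\<Sum>i\<in>G. \<Sum>j\<in>F. cnj (y i) * M i j * x j) \<le> (\<Sum>i\<in>G. cmod (y i) * cmod (mapply M x' i))"
      using norm_sum[of "\<lambda>i. cnj (y i) * mapply M x' i" G] by (simp add: norm_mult)
    also have "\<dots> \<le> l2norm_on y G * l2norm_on (mapply M x') G"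
      by (rule sum_cmod_mult_le_l2norm_on)
    also have "\<dots> \<le> l2norm_on y G * (C * l2norm_on x F)"
    proof (rule mult_left_mono)
      have "l2norm_on (mapply M x') G \<le> l2norm (mapply M x')"
        using C0[OF x'(1)] G l2norm_on_le_l2norm by blast
      also have "\<dots> \<le> C0 * l2norm_on x F"
        using C0[OF x'(1)] x'(2) by simp
      also have "\<dots> \<le> C * l2norm_on x F"
        unfolding C_def by (simp add: mult_right_mono)
      finally show "l2norm_on (mapply M x') G \<le> C * l2norm_on x F" .
    qed simp
    finally show "cmod (\<Sum>i\<in>G. \<Sum>j\<in>F. cnj (y i) * M i j * x j) \<le> C * l2norm_on x F * l2norm_on y G"
      by (simp add: mult_ac)
  qed
  then show ?thesis
    by blast
qed

lemma cZ_bounded: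
  assumes "a \<in> cZ"
  obtains B where "0 \<le> B" "\<And>j. cmod (a j) \<le> B"
proof -
  obtain l1 l2 where "(a \<longlongrightarrow> l1) at_top" "(a \<longlongrightarrow> l2) at_bot"
    using assms unfolding cZ_def by blast
  then have "eventually (\<lambda>j. dist (a j) l1 < 1) at_top" "eventually (\<lambda>j. dist (a j) l2 < 1) at_bot"
    by (simp_all add: tendstoD)
  then obtain N1 N2 where N1: "\<And>j. j \<ge> N1 \<Longrightarrow> dist (a j) l1 < 1" and N2: "\<And>j. j \<le> N2 \<Longrightarrow> dist (a j) l2 < 1"
    unfolding eventually_at_top_linorder eventually_at_bot_linorder by blast
  define B where "B = max (cmod l1 + 1) (max (cmod l2 + 1) (\<Sum>j\<in>{N2..N1}. cmod (a j)))"
  have "cmod (a j) \<le> B" for j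
  proof -
    consider "j \<ge> N1" | "j \<le> N2" | "j \<in> {N2..N1}"
      by fastforce
    then show ?thesis
    proof cases
      case 1
      then show ?thesis
        using N1[of j] norm_triangle_sub[of "a j" l1] unfolding B_def dist_norm by linarith
    next
      case 2
      then show ?thesis
        using N2[of j] norm_triangle_sub[of "a j" l2] unfolding B_def dist_norm by linarith
    next
      case 3
      then have "cmod (a j) \<le> (\<Sum>j\<in>{N2..N1}. cmod (a j))"
        by (intro member_le_sum) auto
      then show ?thesis
        unfolding B_def by linarith
    qed
  qed
  moreover have "0 \<le> B"
    unfolding B_def by (simp add: le_max_iff_disj)
  ultimately show ?thesis
    using that by blast
qed

lemma Calg_form_bounded: "M \<in> Calg \<Longrightarrow> \<exists>C. form_bounded M C"
proof (induction rule: Calg.induct)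
  case gen_U
  have "Ushift = wshift 1 (\<lambda>_. 1)"
    unfolding Ushift_def Upow_def wshift_def by auto
  moreover have "form_bounded (wshift 1 (\<lambda>_. 1)) 1"
    by (rule form_bounded_wshift) simp_all
  ultimately show ?case
    by metis
next
  case (gen_diag a)
  obtain B where "0 \<le> B" "\<And>j. cmod (a j) \<le> B"
    using cZ_bounded[OF gen_diag] by blast
  moreover have "diag a = wshift 0 a"
    unfolding diag_def wshift_def by auto
  ultimately show ?case
    using form_bounded_wshift by metis
next
  case (add M N)
  then show ?case
    using form_bounded_add by blast
next
  case (scale M c)
  then show ?case
    using form_bounded_mscale by blast
next
  case (mult M N)
  then show ?case
    using form_bounded_mmult by blast
next
  case (adj M)
  then show ?case
    using form_bounded_madj by blast
next
  case (lim f M)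
  then show ?case
    using bounded_mat_imp_form_bounded by blast
qed


section \<open>Totally bounded sets and operators of finite rank\<close>

definition l2_totally_bounded :: "vec set \<Rightarrow> bool" where
  "l2_totally_bounded W \<longleftrightarrow>
     (\<forall>e>0. \<exists>F. finite F \<and> (\<forall>y\<in>F. l2 y) \<and> (\<forall>w\<in>W. \<exists>y\<in>F. l2norm (w - y) < e))"

lemma compact_op_iff_totally_bounded:
  "compact_op M \<longleftrightarrow> bounded_mat M \<and> l2_totally_bounded {mapply M x | x. l2 x \<and> l2norm x \<le> 1}"
  unfolding compact_op_def l2_totally_bounded_def by (simp add: setcompr_eq_image)

lemma l2_totally_bounded_subset: "W \<subseteq> W' \<Longrightarrow> l2_totally_bounded W' \<Longrightarrow> l2_totally_bounded W"
  unfolding l2_totally_bounded_def by (meson subsetD)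

lemma l2_totally_bounded_sums:
  assumes "l2_totally_bounded A" "l2_totally_bounded B" "\<And>a. a \<in> A \<Longrightarrow> l2 a" "\<And>b. b \<in> B \<Longrightarrow> l2 b"
  shows "l2_totally_bounded {a + b | a b. a \<in> A \<and> b \<in> B}"
  unfolding l2_totally_bounded_def
proof (intro allI impI)
  fix e :: real
  assume "e > 0"
  obtain FA where FA: "finite FA" "\<forall>y\<in>FA. l2 y" "\<forall>w\<in>A. \<exists>y\<in>FA. l2norm (w - y) < e/2"
    using assms(1) \<open>e > 0\<close> unfolding l2_totally_bounded_def by (meson half_gt_zero)
  obtain FB where FB: "finite FB" "\<forall>y\<in>FB. l2 y" "\<forall>w\<in>B. \<exists>y\<in>FB. l2norm (w - y) < e/2"
    using assms(2) \<open>e > 0\<close> unfolding l2_totally_bounded_def by (meson half_gt_zero)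
  define F where "F = (\<lambda>(p, q). p + q) ` (FA \<times> FB)"
  have "\<exists>y\<in>F. l2norm (a + b - y) < e" if ab: "a \<in> A" "b \<in> B" for a b
  proof -
    obtain ya where ya: "ya \<in> FA" "l2norm (a - ya) < e/2"
      using FA(3) ab(1) by blast
    obtain yb where yb: "yb \<in> FB" "l2norm (b - yb) < e/2"
      using FB(3) ab(2) by blast
    have "l2 (a - ya)" "l2 (b - yb)"
      using l2_diff[OF assms(3)[OF ab(1)], of ya] l2_diff[OF assms(4)[OF ab(2)], of yb]
        FA(2) FB(2) ya(1) yb(1) by simp_all
    have "a + b - (ya + yb) = (a - ya) + (b - yb)"
      by (simp add: algebra_simps)
    then have "l2norm (a + b - (ya + yb)) \<le> l2norm (a - ya) + l2norm (b - yb)"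
      using l2_add \<open>l2 (a - ya)\<close> \<open>l2 (b - yb)\<close> by metis
    then have "l2norm (a + b - (ya + yb)) < e"
      using ya(2) yb(2) by linarith
    moreover have "ya + yb \<in> F"
      unfolding F_def using ya(1) yb(1) by (auto intro: image_eqI[where x = "(ya, yb)"])
    ultimately show ?thesis
      by blast
  qed
  then have "\<forall>w\<in>{a + b | a b. a \<in> A \<and> b \<in> B}. \<exists>y\<in>F. l2norm (w - y) < e"
    by blast
  moreover have "finite F"
    unfolding F_def using FA(1) FB(1) by simp
  moreover have "\<forall>y\<in>F. l2 y"
    unfolding F_def using FA(2) FB(2) l2_add by fast
  ultimately show "\<exists>F. finite F \<and> (\<forall>y\<in>F. l2 y) \<and> (\<forall>w\<in>{a + b | a b. a \<in> A \<and> b \<in> B}. \<exists>y\<in>F. l2norm (w - y) < e)"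
    by blast
qed

lemma l2_totally_bounded_multiples:
  assumes "l2 v"
  shows "l2_totally_bounded {(\<lambda>i. t * v i) | t. cmod t \<le> R}"
  unfolding l2_totally_bounded_def
proof (intro allI impI)
  fix e :: real
  assume "e > 0"
  have "0 < l2norm v + 1"
    using l2norm_nonneg[of v] by linarith
  define d where "d = e / (l2norm v + 1)"
  have "d > 0"
    unfolding d_def using \<open>e > 0\<close> \<open>0 < l2norm v + 1\<close> by simp
  then obtain k where k: "finite k" "cball (0::complex) R \<subseteq> (\<Union>g\<in>k. ball g d)"
    using seq_compact_imp_totally_bounded[OF compact_imp_seq_compact[of "cball (0::complex) R"]] by auto
  define F where "F = (\<lambda>g. (\<lambda>i. g * v i)) ` k"
  have "\<exists>y\<in>F. l2norm ((\<lambda>i. t * v i) - y) < e" if t: "cmod t \<le> R" for t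
  proof -
    obtain g where g: "g \<in> k" "cmod (t - g) < d"
      using k(2) t by (force simp: dist_norm norm_minus_commute)
    have "(\<lambda>i. t * v i) - (\<lambda>i. g * v i) = (\<lambda>i. (t - g) * v i)"
      by (auto simp: fun_eq_iff algebra_simps)
    then have "l2norm ((\<lambda>i. t * v i) - (\<lambda>i. g * v i)) \<le> cmod (t - g) * l2norm v"
      using l2_scale[OF assms, of "t - g"] by simp
    also have "\<dots> \<le> cmod (t - g) * (l2norm v + 1)"
      by (simp add: mult_left_mono)
    also have "\<dots> < d * (l2norm v + 1)"
      using g \<open>0 < l2norm v + 1\<close> by (intro mult_strict_right_mono) auto
    also have "\<dots> = e"
      unfolding d_def using \<open>0 < l2norm v + 1\<close> by simp
    finally show ?thesis
      unfolding F_def using g by blast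
  qed
  moreover have "finite F" "\<forall>y\<in>F. l2 y"
    unfolding F_def using k(1) l2_scale[OF assms] by auto
  ultimately show "\<exists>F. finite F \<and> (\<forall>y\<in>F. l2 y) \<and> (\<forall>w\<in>{(\<lambda>i. t * v i) | t. cmod t \<le> R}. \<exists>y\<in>F. l2norm (w - y) < e)"
    by blast
qed

lemma l2_totally_bounded_span:
  assumes "finite I" "\<And>m. m \<in> I \<Longrightarrow> l2 (v m)"
  shows "l2_totally_bounded {(\<lambda>i. \<Sum>m\<in>I. c m * v m i) | c. \<forall>m\<in>I. cmod (c m) \<le> R}"
  using assms
proof (induction I rule: finite_induct)
  case empty
  have "l2 0"
    by (simp add: l2_def)
  then have "l2_totally_bounded {0}"
    unfolding l2_totally_bounded_def by (intro allI impI exI[of _ "{0}"]) (auto simp: l2norm_def)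
  then show ?case
    by (rule l2_totally_bounded_subset[rotated]) (auto simp: zero_fun_def)
next
  case (insert a I)
  let ?A = "{(\<lambda>i. t * v a i) | t. cmod t \<le> R}"
  let ?B = "{(\<lambda>i. \<Sum>m\<in>I. c m * v m i) | c. \<forall>m\<in>I. cmod (c m) \<le> R}"
  have sums: "l2_totally_bounded {p + q | p q. p \<in> ?A \<and> q \<in> ?B}"
  proof (rule l2_totally_bounded_sums)
    show "l2_totally_bounded ?A"
      using l2_totally_bounded_multiples insert by simp
    show "l2_totally_bounded ?B"
      using insert by simp
    show "l2 p" if "p \<in> ?A" for p
      using that l2_scale insert by auto
    show "l2 q" if "q \<in> ?B" for q
      using that l2_sum insert by auto
  qed
  have "(\<lambda>i. \<Sum>m\<in>insert a I. c m * v m i) \<in> {p + q | p q. p \<in> ?A \<and> q \<in> ?B}"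
    if "\<forall>m\<in>insert a I. cmod (c m) \<le> R" for c
  proof -
    have "(\<lambda>i. \<Sum>m\<in>insert a I. c m * v m i) = (\<lambda>i. c a * v a i) + (\<lambda>i. \<Sum>m\<in>I. c m * v m i)"
      using insert by (auto simp: fun_eq_iff)
    then show ?thesis
      using that by blast
  qed
  then have "{(\<lambda>i. \<Sum>m\<in>insert a I. c m * v m i) | c. \<forall>m\<in>insert a I. cmod (c m) \<le> R}
      \<subseteq> {p + q | p q. p \<in> ?A \<and> q \<in> ?B}"
    by blast
  then show ?case
    using sums by (rule l2_totally_bounded_subset)
qed

lemma mapply_vanishing_off_cross:
  assumes "finite S" and vanishes: "\<And>i k. i \<notin> S \<Longrightarrow> k \<notin> S \<Longrightarrow> Z i k = 0"
  shows "mapply Z x = (\<lambda>i. \<Sum>m\<in>S. x m * (if i \<in> S then 0 else Z i m))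
    + (\<lambda>i. \<Sum>m\<in>S. mapply Z x m * (if i = m then 1 else 0))"
proof
  fix i
  show "mapply Z x i = ((\<lambda>i. \<Sum>m\<in>S. x m * (if i \<in> S then 0 else Z i m))
    + (\<lambda>i. \<Sum>m\<in>S. mapply Z x m * (if i = m then 1 else 0))) i"
  proof (cases "i \<in> S")
    case True
    then show ?thesis
      using assms(1) by (simp add: if_distrib cong: if_cong)
  next
    case False
    have "mapply Z x i = infsum (\<lambda>k. Z i k * x k) S"
      unfolding mapply_def by (rule infsum_cong_neutral) (use vanishes False in auto)
    moreover have "(\<Sum>m\<in>S. mapply Z x m * (if i = m then 1 else 0)) = 0"
      using False by (intro sum.neutral) auto
    ultimately show ?thesis
      using assms(1) False by (simp add: mult.commute)
  qed
qed

lemma compact_op_if_vanishes_off_cross: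
  assumes "form_bounded Z C" "finite S" and vanishes: "\<And>i k. i \<notin> S \<Longrightarrow> k \<notin> S \<Longrightarrow> Z i k = 0"
  shows "compact_op Z"
proof -
  define col where "col k = (\<lambda>i. if i \<in> S then 0 else Z i k)" for k
  define unit where "unit j = (\<lambda>i::int. if i = j then (1::complex) else 0)" for j
  have l2_col: "l2 (col k)" for k
  proof (rule conjunct1[OF l2_if_l2norm_on_bounded])
    fix G :: "int set"
    assume "finite G"
    have "l2norm_on (col k) G \<le> l2norm_on (\<lambda>i. Z i k) G"
      unfolding l2norm_on_def col_def by (rule L2_set_mono) auto
    then show "l2norm_on (col k) G \<le> C"
      using form_bounded_column[OF assms(1) \<open>finite G\<close>, of k] by simp
  qed
  have l2_unit: "l2 (unit j)" for j
    unfolding unit_def using l2_unit_vector by blast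
  have l2: "l2 (\<lambda>i. \<Sum>m\<in>S. c m * col m i)" "l2 (\<lambda>i. \<Sum>m\<in>S. c m * unit m i)" for c
    using l2_sum[OF assms(2)] l2_col l2_unit by blast+
  let ?A = "{(\<lambda>i. \<Sum>m\<in>S. c m * col m i) | c. \<forall>m\<in>S. cmod (c m) \<le> 1}"
  let ?B = "{(\<lambda>i. \<Sum>m\<in>S. c m * unit m i) | c. \<forall>m\<in>S. cmod (c m) \<le> C}"
  have sums: "l2_totally_bounded {p + q | p q. p \<in> ?A \<and> q \<in> ?B}"
  proof (rule l2_totally_bounded_sums)
    show "l2_totally_bounded ?A"
      using l2_col by (intro l2_totally_bounded_span assms(2))
    show "l2_totally_bounded ?B"
      using l2_unit by (intro l2_totally_bounded_span assms(2))
  qed (use l2 in auto)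
  have "mapply Z x \<in> {p + q | p q. p \<in> ?A \<and> q \<in> ?B}" if x: "l2 x" "l2norm x \<le> 1" for x
  proof -
    have decompose: "mapply Z x = (\<lambda>i. \<Sum>m\<in>S. x m * col m i) + (\<lambda>i. \<Sum>m\<in>S. mapply Z x m * unit m i)"
      unfolding col_def unit_def by (rule mapply_vanishing_off_cross[OF assms(2) vanishes])
    have "cmod (x m) \<le> 1" for m
      using cmod_le_l2norm[OF x(1)] x(2) by (rule order_trans)
    then have "(\<lambda>i. \<Sum>m\<in>S. x m * col m i) \<in> ?A"
      by blast
    have "(\<lambda>i. \<Sum>m\<in>S. mapply Z x m * unit m i) \<in> ?B"
      using form_bounded_mapply_coordinate[OF assms(1) x] by blast
    with decompose \<open>(\<lambda>i. \<Sum>m\<in>S. x m * col m i) \<in> ?A\<close> show ?thesis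
      by blast
  qed
  then have "{mapply Z x | x. l2 x \<and> l2norm x \<le> 1} \<subseteq> {p + q | p q. p \<in> ?A \<and> q \<in> ?B}"
    by blast
  then have "l2_totally_bounded {mapply Z x | x. l2 x \<and> l2norm x \<le> 1}"
    using sums by (rule l2_totally_bounded_subset)
  then show ?thesis
    using form_bounded_imp_bounded_mat[OF assms(1)] compact_op_iff_totally_bounded by blast
qed


section \<open>The algebra \<open>Alg0\<close>\<close>

lemma sum_fun_apply: "(\<Sum>a\<in>A. f a) x = (\<Sum>a\<in>A. f a x)"
  by (induction A rule: infinite_finite_induct) auto

lemma mmult_diag: "mmult X (diag q) i k = X i k * q k"
proof -
  have "mmult X (diag q) i k = infsum (\<lambda>j. X i j * diag q j k) {k}"
    unfolding mmult_def by (rule infsum_cong_neutral) (auto simp: diag_def)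
  then show ?thesis
    by (simp add: diag_def)
qed

lemma mmult_Upow_diag: "mmult (Upow n) (diag a) = wshift n a"
  by (intro ext) (simp add: mmult_diag Upow_def wshift_def)

lemma Alg0_iff_wshift:
  "M \<in> Alg0 \<longleftrightarrow> (\<exists>F a. finite F \<and> (\<forall>n\<in>F. ev_const (a n)) \<and> M = (\<Sum>n\<in>F. wshift n (a n)))"
  by (simp add: Alg0_def mmult_Upow_diag)

lemma sum_wshift_apply:
  assumes "finite F"
  shows "(\<Sum>n\<in>F. wshift n (a n)) i k = (if i - k \<in> F then a (i - k) k else 0)"
proof -
  have "(\<Sum>n\<in>F. wshift n (a n)) i k = (\<Sum>n\<in>F. if n = i - k then a n k else 0)"
    unfolding sum_fun_apply wshift_def by (rule sum.cong) auto
  also have "\<dots> = (if i - k \<in> F then a (i - k) k else 0)"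
    using assms by (simp add: sum.delta')
  finally show ?thesis .
qed

lemma Alg0_entries:
  assumes "M \<in> Alg0"
  obtains F a where "finite F" "\<forall>n\<in>F. ev_const (a n)"
    "\<And>i k. M i k = (if i - k \<in> F then a (i - k) k else 0)"
proof -
  obtain F a where "finite F" "\<forall>n\<in>F. ev_const (a n)" "M = (\<Sum>n\<in>F. wshift n (a n))"
    using assms unfolding Alg0_iff_wshift by blast
  then show ?thesis
    by (intro that[of F a]) (simp_all add: sum_wshift_apply)
qed

lemma ev_const_eventually:
  assumes "ev_const f"
  shows "\<forall>\<^sub>F K in at_top. (\<forall>k\<ge>K. f k = f K) \<and> (\<forall>k\<le>-K. f k = f (-K))"
proof -
  obtain k0 where k0: "\<forall>k\<ge>k0. f k = f k0" "\<forall>k\<le>-k0. f k = f (-k0)"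
    using assms unfolding ev_const_def by blast
  have "(\<forall>k\<ge>K. f k = f K) \<and> (\<forall>k\<le>-K. f k = f (-K))" if K: "K \<ge> k0" for K
  proof (intro conjI allI impI)
    fix k
    show "f k = f K" if "k \<ge> K"
      using k0(1) K that by (metis order_trans)
    show "f k = f (-K)" if "k \<le> -K"
      using k0(2) K that by (metis neg_le_iff_le order_trans)
  qed
  then show ?thesis
    unfolding eventually_at_top_linorder by blast
qed

lemma ev_const_diff:
  assumes "ev_const f" "ev_const g"
  shows "ev_const (\<lambda>k. f k - g k)"
proof -
  have "\<forall>\<^sub>F K in at_top. (\<forall>k\<ge>K. f k - g k = f K - g K) \<and> (\<forall>k\<le>-K. f k - g k = f (-K) - g (-K))"
    using eventually_conj[OF ev_const_eventually[OF assms(1)] ev_const_eventually[OF assms(2)]]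
    by (rule eventually_mono) metis
  then obtain K0 where "\<And>K. K \<ge> K0 \<Longrightarrow>
      (\<forall>k\<ge>K. f k - g k = f K - g K) \<and> (\<forall>k\<le>-K. f k - g k = f (-K) - g (-K))"
    unfolding eventually_at_top_linorder by blast
  from this[OF order_refl] show ?thesis
    unfolding ev_const_def by blast
qed

lemma ev_const_zero [simp]: "ev_const (\<lambda>k. 0)"
  unfolding ev_const_def by auto

lemma Alg0_diff:
  assumes "M \<in> Alg0" "N \<in> Alg0"
  shows "M - N \<in> Alg0"
proof -
  obtain F a where F: "finite F" "\<forall>n\<in>F. ev_const (a n)"
    and M: "\<And>i k. M i k = (if i - k \<in> F then a (i - k) k else 0)"
    using Alg0_entries[OF assms(1)] by blast
  obtain G b where G: "finite G" "\<forall>n\<in>G. ev_const (b n)"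
    and N: "\<And>i k. N i k = (if i - k \<in> G then b (i - k) k else 0)"
    using Alg0_entries[OF assms(2)] by blast
  define c where "c n = (\<lambda>k. (if n \<in> F then a n k else 0) - (if n \<in> G then b n k else 0))" for n
  have restrict: "ev_const (\<lambda>k. if n \<in> H then h n k else 0)" if "\<forall>n\<in>H. ev_const (h n)" for H h n
    using that by (cases "n \<in> H") simp_all
  have "ev_const (c n)" for n
    unfolding c_def using restrict F(2) G(2) by (intro ev_const_diff)
  moreover have "M - N = (\<Sum>n\<in>F \<union> G. wshift n (c n))"
    using F(1) G(1) by (intro ext) (auto simp: sum_wshift_apply M N c_def)
  ultimately show ?thesis
    unfolding Alg0_iff_wshift using F(1) G(1) by blast
qed


section \<open>Compact elements of \<open>Alg0\<close> are finite matrices\<close>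

lemma l2_column_if_bounded_mat: "bounded_mat M \<Longrightarrow> l2 (\<lambda>i. M i j)"
  using l2_unit_vector[of j] mapply_unit_vector[of M j] unfolding bounded_mat_def by metis

lemma compact_op_separated_entries_vanish:
  assumes "compact_op M" "infinite J"
    and diagonal: "\<And>j. j \<in> J \<Longrightarrow> M (j + n) j = c"
    and off_diagonal: "\<And>j j'. j \<in> J \<Longrightarrow> j' \<in> J \<Longrightarrow> j \<noteq> j' \<Longrightarrow> M (j + n) j' = 0"
  shows "c = 0"
proof (rule ccontr)
  assume "c \<noteq> 0"
  then have "cmod c / 2 > 0"
    by simp
  then obtain G where G: "finite G" "\<forall>y\<in>G. l2 y"
      "\<forall>x. l2 x \<and> l2norm x \<le> 1 \<longrightarrow> (\<exists>y\<in>G. l2norm (mapply M x - y) < cmod c / 2)"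
    using assms(1) unfolding compact_op_def by blast
  have "\<exists>y\<in>G. l2norm (mapply M (\<lambda>k. if k = j then 1 else 0) - y) < cmod c / 2" for j
    using G(3) l2_unit_vector[of j] by (metis order_refl)
  then have "\<forall>j. \<exists>y. y \<in> G \<and> l2norm ((\<lambda>i. M i j) - y) < cmod c / 2"
    unfolding mapply_unit_vector by blast
  from choice[OF this] obtain g where g: "\<And>j. g j \<in> G" "\<And>j. l2norm ((\<lambda>i. M i j) - g j) < cmod c / 2"
    by blast
  have coordinate: "cmod (M i j - g j i) < cmod c / 2" for i j
  proof -
    have "l2 ((\<lambda>i. M i j) - g j)"
      using l2_diff l2_column_if_bounded_mat[of M j] assms(1) g(1) G(2) unfolding compact_op_def by blast
    then have "cmod (((\<lambda>i. M i j) - g j) i) \<le> l2norm ((\<lambda>i. M i j) - g j)"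
      by (rule cmod_le_l2norm)
    then show ?thesis
      using g(2)[of j] by simp
  qed
  have "finite (g ` J)"
    using g(1) G(1) by (meson finite_subset image_subsetI)
  then have "\<not> inj_on g J"
    using assms(2) finite_imageD by blast
  then obtain j j' where jj: "j \<in> J" "j' \<in> J" "j \<noteq> j'" "g j = g j'"
    unfolding inj_on_def by blast
  \<comment> \<open>the columns j and j' share an approximant, but differ by c in row j + n\<close>
  have "cmod c \<le> cmod (c - g j (j + n)) + cmod (g j (j + n))"
    using norm_triangle_ineq[of "c - g j (j + n)" "g j (j + n)"] by simp
  moreover have "cmod (c - g j (j + n)) < cmod c / 2"
    using coordinate[of "j + n" j] diagonal[OF jj(1)] by simp
  moreover have "cmod (g j (j + n)) < cmod c / 2"
    using coordinate[of "j + n" j'] off_diagonal[OF jj(1-3)] jj(4) by simp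
  ultimately show False
    by linarith
qed

lemma compact_Alg0_coeff_vanishes:
  assumes "compact_op M"
    and entries: "\<And>i k. M i k = (if i - k \<in> F then a (i - k) k else 0)"
    and "n \<in> F" and bound: "\<And>m. m \<in> F \<Longrightarrow> \<bar>m\<bar> \<le> L"
    and step: "\<bar>s\<bar> = 2 * L + 1" and periodic: "\<And>t::nat. a n (b + int t * s) = a n b"
  shows "a n b = 0"
proof (rule compact_op_separated_entries_vanish[OF assms(1), where J = "range (\<lambda>t::nat. b + int t * s)" and n = n])
  have "0 \<le> L"
    using bound[OF \<open>n \<in> F\<close>] by simp
  then have "s \<noteq> 0"
    using step by auto
  then show "infinite (range (\<lambda>t::nat. b + int t * s))"
    by (intro range_inj_infinite) (auto simp: inj_def)
  show "M (j + n) j = a n b" if "j \<in> range (\<lambda>t::nat. b + int t * s)" for j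
    using that entries \<open>n \<in> F\<close> periodic by auto
  show "M (j + n) j' = 0"
    if jj: "j \<in> range (\<lambda>t::nat. b + int t * s)" "j' \<in> range (\<lambda>t::nat. b + int t * s)" "j \<noteq> j'"
    for j j'
  proof -
    obtain t t' where t: "j = b + int t * s" "j' = b + int t' * s" "t \<noteq> t'"
      using jj by auto
    then have "\<bar>j - j'\<bar> = \<bar>int t - int t'\<bar> * \<bar>s\<bar>"
      by (simp add: abs_mult[symmetric] algebra_simps)
    moreover have "1 * \<bar>s\<bar> \<le> \<bar>int t - int t'\<bar> * \<bar>s\<bar>"
      using t(3) by (intro mult_right_mono) auto
    ultimately have "2 * L + 1 \<le> \<bar>j - j'\<bar>"
      using step by simp
    then have "j + n - j' \<notin> F"
      using bound[of "j + n - j'"] bound[OF \<open>n \<in> F\<close>] by arith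
    then show ?thesis
      using entries by simp
  qed
qed

lemma compact_Alg0_coeff_finite_support:
  assumes "compact_op M"
    and entries: "\<And>i k. M i k = (if i - k \<in> F then a (i - k) k else 0)"
    and "n \<in> F" "ev_const (a n)" and bound: "\<And>m. m \<in> F \<Longrightarrow> \<bar>m\<bar> \<le> L"
  shows "\<exists>K. \<forall>k. a n k \<noteq> 0 \<longrightarrow> \<bar>k\<bar> \<le> K"
proof -
  obtain k0 where k0: "\<forall>k\<ge>k0. a n k = a n k0" "\<forall>k\<le>-k0. a n k = a n (-k0)"
    using assms(4) unfolding ev_const_def by blast
  have "0 \<le> L"
    using bound[OF \<open>n \<in> F\<close>] by simp
  have upper: "a n k0 = 0"
  proof (rule compact_Alg0_coeff_vanishes[OF assms(1) entries \<open>n \<in> F\<close> bound])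
    show "\<bar>2 * L + 1\<bar> = 2 * L + 1"
      using \<open>0 \<le> L\<close> by simp
    have "k0 \<le> k0 + int t * (2 * L + 1)" for t
      using \<open>0 \<le> L\<close> by simp
    then show "a n (k0 + int t * (2 * L + 1)) = a n k0" for t
      using k0(1) by blast
  qed
  have lower: "a n (-k0) = 0"
  proof (rule compact_Alg0_coeff_vanishes[OF assms(1) entries \<open>n \<in> F\<close> bound])
    show "\<bar>-(2 * L + 1)\<bar> = 2 * L + 1"
      using \<open>0 \<le> L\<close> by simp
    have "-k0 + int t * -(2 * L + 1) \<le> -k0" for t
      using \<open>0 \<le> L\<close> by (simp add: mult_nonneg_nonpos)
    then show "a n (-k0 + int t * -(2 * L + 1)) = a n (-k0)" for t
      using k0(2) by blast
  qed
  have "\<bar>k\<bar> \<le> \<bar>k0\<bar>" if nonzero: "a n k \<noteq> 0" for k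
  proof (rule ccontr)
    assume "\<not> \<bar>k\<bar> \<le> \<bar>k0\<bar>"
    then have "k \<ge> k0 \<or> k \<le> -k0"
      by arith
    then have "a n k = 0"
      using k0 upper lower by metis
    with nonzero show False
      by contradiction
  qed
  then show ?thesis
    by blast
qed

lemma compact_Alg0_finite_support:
  assumes "M \<in> Alg0" "compact_op M"
  obtains R where "\<And>i k. M i k \<noteq> 0 \<Longrightarrow> \<bar>i\<bar> \<le> R \<and> \<bar>k\<bar> \<le> R"
proof -
  obtain F a where F: "finite F" "\<forall>n\<in>F. ev_const (a n)"
    and entries: "\<And>i k. M i k = (if i - k \<in> F then a (i - k) k else 0)"
    using Alg0_entries[OF assms(1)] by blast
  define L where "L = (\<Sum>m\<in>F. \<bar>m\<bar>)"
  have bound: "\<bar>m\<bar> \<le> L" if "m \<in> F" for m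
    unfolding L_def using F(1) that by (intro member_le_sum) auto
  have "\<forall>n\<in>F. \<exists>K. \<forall>k. a n k \<noteq> 0 \<longrightarrow> \<bar>k\<bar> \<le> K"
    using compact_Alg0_coeff_finite_support[OF assms(2) entries _ _ bound] F(2) by blast
  from bchoice[OF this] obtain K where K: "\<forall>n\<in>F. \<forall>k. a n k \<noteq> 0 \<longrightarrow> \<bar>k\<bar> \<le> K n"
    by blast
  define R where "R = (\<Sum>n\<in>F. \<bar>K n\<bar>) + L"
  have "\<bar>i\<bar> \<le> R \<and> \<bar>k\<bar> \<le> R" if "M i k \<noteq> 0" for i k
  proof -
    have "i - k \<in> F" "a (i - k) k \<noteq> 0"
      using that entries[of i k] by (auto split: if_splits)
    then have "\<bar>k\<bar> \<le> \<bar>K (i - k)\<bar>"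
      using K by fastforce
    also have "\<dots> \<le> (\<Sum>n\<in>F. \<bar>K n\<bar>)"
      using F(1) \<open>i - k \<in> F\<close> by (intro member_le_sum) auto
    finally have "\<bar>k\<bar> \<le> (\<Sum>n\<in>F. \<bar>K n\<bar>)" .
    moreover have "\<bar>i - k\<bar> \<le> L" "0 \<le> L"
      using bound \<open>i - k \<in> F\<close> by (auto simp: L_def sum_nonneg)
    ultimately show ?thesis
      unfolding R_def by linarith
  qed
  then show ?thesis
    using that by blast
qed


section \<open>Derivations on \<open>Alg0\<close>\<close>

lemma diag_indicator_Alg0: "diag (\<lambda>k. if \<bar>k\<bar> \<le> R then 1 else 0) \<in> Alg0"
proof -
  define q :: "int \<Rightarrow> complex" where "q = (\<lambda>k. if \<bar>k\<bar> \<le> R then 1 else 0)"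
  have "ev_const q"
    unfolding ev_const_def q_def by (intro exI[of _ "\<bar>R\<bar> + 1"]) auto
  moreover have "diag q = (\<Sum>n\<in>{0}. wshift n q)"
    by (auto simp: diag_def wshift_def)
  ultimately have "diag q \<in> Alg0"
    unfolding Alg0_iff_wshift by (intro exI[of _ "{0}"] exI[of _ "\<lambda>_. q"]) simp
  then show ?thesis
    by (simp add: q_def)
qed

lemma derivation_on_compact:
  assumes "derivation_on d" "M \<in> Alg0" "compact_op M"
  shows "compact_op (d M)"
proof -
  obtain R where R: "\<And>i k. M i k \<noteq> 0 \<Longrightarrow> \<bar>i\<bar> \<le> R \<and> \<bar>k\<bar> \<le> R"
    using compact_Alg0_finite_support[OF assms(2,3)] by blast
  define P where "P = diag (\<lambda>k. if \<bar>k\<bar> \<le> R then 1 else 0)"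
  have "P \<in> Alg0"
    unfolding P_def by (rule diag_indicator_Alg0)
  have "mmult M P = M"
    using R by (intro ext) (auto simp: P_def mmult_diag)
  then have Leibniz: "d M = mmult (d M) P + mmult M (d P)"
    using assms(1,2) \<open>P \<in> Alg0\<close> unfolding derivation_on_def by metis
  have "d M i k = 0" if "i \<notin> {-R..R}" "k \<notin> {-R..R}" for i k
  proof -
    have outside: "\<not> \<bar>i\<bar> \<le> R" "\<not> \<bar>k\<bar> \<le> R"
      using that by auto
    have "M i j = 0" for j
      using R outside(1) by blast
    then have "mmult M (d P) i k = 0"
      by (simp add: mmult_def)
    moreover have "mmult (d M) P i k = 0"
      using outside(2) by (simp add: P_def mmult_diag)
    moreover have "d M i k = mmult (d M) P i k + mmult M (d P) i k"
      by (subst Leibniz) simp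
    ultimately show ?thesis
      by simp
  qed
  moreover obtain C where "form_bounded (d M) C"
    using Calg_form_bounded assms(1,2) unfolding derivation_on_def by blast
  ultimately show ?thesis
    using compact_op_if_vanishes_off_cross by blast
qed

lemma derivation_on_diff:
  assumes "derivation_on d" "M \<in> Alg0" "N \<in> Alg0"
  shows "d (M - N) = d M - d N"
proof -
  have "d M = d ((M - N) + N)"
    by simp
  also have "\<dots> = d (M - N) + d N"
    using assms Alg0_diff unfolding derivation_on_def by blast
  finally show ?thesis
    by (simp add: algebra_simps)
qed

theorem mainTheorem8:
  fixes d :: "mat \<Rightarrow> mat"
  assumes "derivation_on d"
  shows "(\<forall>M\<in>Alg0. compact_op M \<longrightarrow> compact_op (d M)) \<and>
         (\<forall>M\<in>Alg0. \<forall>N\<in>Alg0. compact_op (M - N) \<longrightarrow> compact_op (d M - d N))"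
proof (intro conjI ballI impI)
  show "compact_op (d M)" if "M \<in> Alg0" "compact_op M" for M
    using derivation_on_compact[OF assms] that by blast
  show "compact_op (d M - d N)" if "M \<in> Alg0" "N \<in> Alg0" "compact_op (M - N)" for M N
    using derivation_on_compact[OF assms] derivation_on_diff[OF assms] Alg0_diff that by metis
qed

end
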